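(* Let $X$ be a compactum with compatible metric $d$, let $n\geq2$, and let $f:X\to X$ be a function. Consider the statements: (1) $f$ is accessible; (2) $F_n(f)$ is accessible; (3) $SF_n(f)$ is accessible. Then (2) implies (1), and (2) implies (3).
   Context: A compactum is a nondegenerate compact, perfect, Hausdorff topological space. $F_n(X)$ is the set of nonempty subsets of $X$ with at most $n$ points, with the Hausdorff metric $d_H$; $F_1(X)=\{\{x\}:x\in X\}$; $F_n(f)(A)=f(A)$. $SF_n(X)=F_n(X)/F_1(X)$ is the quotient collapsing $F_1(X)$ to a point, $q$ the quotient map, $F_X=q(F_1(X))$, and $SF_n(f)(\chi)=q(F_n(f)(q^{-1}(\chi)))$ for $\chi\neq F_X$, $SF_n(f)(F_X)=F_X$. $SF_n(X)$ carries the metric $\rho(\chi_1,\chi_2)=\mathcal{H}^2(F_1(X)\cup q^{-1}(\chi_1),F_1(X)\cup q^{-1}(\chi_2))$, with $\mathcal{H}^2$ the Hausdorff metric on closed subsets of $F_n(X)$ induced by $d_H$. A function $g$ on a metric space $(Z,D)$ is accessible if for every $\varepsilon>0$ and all nonempty open $U,V\subseteq Z$ there exist $x\in U$, $y\in V$ and $m\in\mathbb{N}$ with $D(g^m(x),g^m(y))<\varepsilon$ (with $D=d,d_H,\rho$ for $f,F_n(f),SF_n(f)$). *)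

theory Defs
  imports "HOL-Analysis.Analysis"
begin

definition haus_dist :: "('b \<Rightarrow> 'b \<Rightarrow> real) \<Rightarrow> 'b set \<Rightarrow> 'b set \<Rightarrow> real" where
  "haus_dist D S T =
     max (SUP x\<in>S. INF y\<in>T. D x y) (SUP y\<in>T. INF x\<in>S. D x y)"

definition metric_open_in :: "'b set \<Rightarrow> ('b \<Rightarrow> 'b \<Rightarrow> real) \<Rightarrow> 'b set \<Rightarrow> bool" where
  "metric_open_in Z D U \<longleftrightarrow> U \<subseteq> Z \<and> (\<forall>x\<in>U. \<exists>r>0. \<forall>y\<in>Z. D x y < r \<longrightarrow> y \<in> U)"

definition accessible :: "'b set \<Rightarrow> ('b \<Rightarrow> 'b \<Rightarrow> real) \<Rightarrow> ('b \<Rightarrow> 'b) \<Rightarrow> bool" where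
  "accessible Z D g \<longleftrightarrow>
     (\<forall>\<epsilon>>0. \<forall>U V. metric_open_in Z D U \<and> U \<noteq> {} \<and> metric_open_in Z D V \<and> V \<noteq> {} \<longrightarrow>
        (\<exists>x\<in>U. \<exists>y\<in>V. \<exists>m::nat. m \<ge> 1 \<and> D ((g ^^ m) x) ((g ^^ m) y) < \<epsilon>))"

text \<open>Compactum: nondegenerate compact perfect Hausdorff space (Hausdorff is automatic).\<close>
definition compactum :: "'a::metric_space set \<Rightarrow> bool" where
  "compactum X \<longleftrightarrow> compact X \<and> (\<forall>x\<in>X. x islimpt X) \<and> (\<exists>x\<in>X. \<exists>y\<in>X. x \<noteq> y)"

definition Fn :: "nat \<Rightarrow> 'a set \<Rightarrow> 'a set set" where
  "Fn n X = {A. A \<subseteq> X \<and> A \<noteq> {} \<and> finite A \<and> card A \<le> n}"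

definition F1 :: "'a set \<Rightarrow> 'a set set" where
  "F1 X = {{x} | x. x \<in> X}"

definition dH :: "'a::metric_space set \<Rightarrow> 'a set \<Rightarrow> real" where
  "dH A B = haus_dist dist A B"

definition Fn_map :: "('a \<Rightarrow> 'a) \<Rightarrow> 'a set \<Rightarrow> 'a set" where
  "Fn_map f A = f ` A"

text \<open>The quotient SF_n(X) = F_n(X)/F_1(X). A point of SF_n(X) is represented by its fibre
  q^{-1}(chi) (a subset of F_n(X)): the collapsed point F_X is F_1(X), every other point
  is a singleton {A} with A in F_n(X) - F_1(X).\<close>
definition q :: "'a set \<Rightarrow> 'a set \<Rightarrow> 'a set set" where
  "q X A = (if A \<in> F1 X then F1 X else {A})"

definition SFn :: "nat \<Rightarrow> 'a set \<Rightarrow> 'a set set set" where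
  "SFn n X = q X ` Fn n X"

definition SFn_map :: "'a set \<Rightarrow> ('a \<Rightarrow> 'a) \<Rightarrow> 'a set set \<Rightarrow> 'a set set" where
  "SFn_map X f c = (if c = F1 X then F1 X else q X (Fn_map f (the_elem c)))"

text \<open>The metric rho on SF_n(X); the fibre q^{-1}(chi) is chi itself in this representation.\<close>
definition rho :: "'a::metric_space set \<Rightarrow> 'a set set \<Rightarrow> 'a set set \<Rightarrow> real" where
  "rho X c1 c2 = haus_dist dH (F1 X \<union> c1) (F1 X \<union> c2)"

end

theory Submission
  imports Defs
begin

text \<open>Both implications come from transporting open sets. For (2) \<Rightarrow> (1), an open set U of X
  yields the open set of all A \<in> F_n(X) with A \<subseteq> U; if F_n(f)^m A and F_n(f)^m B are
  \<epsilon>-close in d_H, then f^m a is \<epsilon>-close to some f^m b for any a \<in> A. For (2) \<Rightarrow> (3), the quotient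
  map q is onto, does not increase distances (\<rho>(q A, q B) \<le> d_H(A, B)) and semiconjugates F_n(f)
  to SF_n(f), and accessibility passes to such factors. Neither argument uses compactness of X,
  and n \<ge> 1 suffices.\<close>

lemma haus_dist_flip: "haus_dist D S T = haus_dist (\<lambda>x y. D y x) T S"
  by (simp add: haus_dist_def max.commute)

lemma haus_dist_nonneg:
  assumes "\<And>x y. x \<in> S \<Longrightarrow> y \<in> T \<Longrightarrow> 0 \<le> D x y"
    and "finite S" "S \<noteq> {}" "finite T" "T \<noteq> {}"
  shows "0 \<le> haus_dist D S T"
proof -
  obtain x where x: "x \<in> S" using assms by auto
  have "0 \<le> (INF y\<in>T. D x y)"
    using assms x by (intro cINF_greatest) auto
  also have "\<dots> \<le> (SUP x\<in>S. INF y\<in>T. D x y)"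
    using assms x by (intro cSUP_upper) auto
  finally show ?thesis unfolding haus_dist_def by simp
qed

lemma haus_dist_lessD:
  assumes "haus_dist D S T < e" "x \<in> S" "finite S" "finite T" "T \<noteq> {}"
  shows "\<exists>y\<in>T. D x y < e"
proof -
  have "(INF y\<in>T. D x y) \<le> (SUP x\<in>S. INF y\<in>T. D x y)"
    using assms by (intro cSUP_upper) auto
  also have "\<dots> \<le> haus_dist D S T" unfolding haus_dist_def by simp
  finally have "(INF y\<in>T. D x y) < e" using assms(1) by simp
  then show ?thesis using assms by (subst (asm) cINF_less_iff) auto
qed

lemma haus_dist_lessD':
  assumes "haus_dist D S T < e" "y \<in> T" "finite S" "S \<noteq> {}" "finite T"
  shows "\<exists>x\<in>S. D x y < e"
proof -
  have "haus_dist (\<lambda>x y. D y x) T S < e"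
    using assms(1) unfolding haus_dist_flip[of D S T] .
  then show ?thesis using haus_dist_lessD assms by fastforce
qed

lemma SUP_INF_insert_le:
  fixes D :: "'a \<Rightarrow> 'a \<Rightarrow> real"
  assumes "\<And>x y. x \<in> insert a S \<Longrightarrow> y \<in> insert b S \<Longrightarrow> 0 \<le> D x y"
    and "\<And>x. x \<in> S \<Longrightarrow> D x x = 0"
  shows "(SUP x\<in>insert a S. INF y\<in>insert b S. D x y) \<le> D a b"
proof (rule cSUP_least)
  fix x assume x: "x \<in> insert a S"
  have bdd: "bdd_below ((\<lambda>y. D x y) ` insert b S)"
    using assms(1) x by (auto intro!: bdd_belowI[where m=0])
  show "(INF y\<in>insert b S. D x y) \<le> D a b"
  proof (cases "x \<in> S")
    case True
    then have "(INF y\<in>insert b S. D x y) \<le> D x x" using bdd by (intro cINF_lower) auto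
    then show ?thesis using assms True by force
  next
    case False
    then show ?thesis using x cINF_lower[OF bdd, of b] by simp
  qed
qed simp

lemma haus_dist_insert_le:
  assumes "\<And>x y. x \<in> insert a (insert b S) \<Longrightarrow> y \<in> insert a (insert b S) \<Longrightarrow> 0 \<le> D x y"
    and "\<And>x. x \<in> S \<Longrightarrow> D x x = 0"
  shows "haus_dist D (insert a S) (insert b S) \<le> D a b"
  using SUP_INF_insert_le[of a S b D] SUP_INF_insert_le[of b S a "\<lambda>x y. D y x"] assms
  unfolding haus_dist_def by auto

lemma funpow_semiconj:
  assumes "g ` Z \<subseteq> Z" "\<And>a. a \<in> Z \<Longrightarrow> \<pi> (g a) = g' (\<pi> a)" "a \<in> Z"
  shows "(g ^^ m) a \<in> Z \<and> \<pi> ((g ^^ m) a) = (g' ^^ m) (\<pi> a)"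
  using assms by (induction m) auto

lemma accessibleE:
  assumes "accessible Z D g" "\<epsilon> > 0"
    and "metric_open_in Z D U" "U \<noteq> {}" "metric_open_in Z D V" "V \<noteq> {}"
  obtains x y m where "x \<in> U" "y \<in> V" "m \<ge> 1" "D ((g ^^ m) x) ((g ^^ m) y) < \<epsilon>"
  using assms unfolding accessible_def by blast

lemma metric_open_in_vimage:
  assumes "\<pi> ` Z \<subseteq> Z'" "\<And>a b. a \<in> Z \<Longrightarrow> b \<in> Z \<Longrightarrow> D' (\<pi> a) (\<pi> b) \<le> D a b"
    and "metric_open_in Z' D' W"
  shows "metric_open_in Z D {a \<in> Z. \<pi> a \<in> W}"
  unfolding metric_open_in_def
proof (intro conjI ballI)
  fix a assume a: "a \<in> {a \<in> Z. \<pi> a \<in> W}"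
  then obtain r where r: "r > 0" "\<forall>y\<in>Z'. D' (\<pi> a) y < r \<longrightarrow> y \<in> W"
    using assms(3) unfolding metric_open_in_def by blast
  have "\<pi> b \<in> W" if "b \<in> Z" "D a b < r" for b
    using r assms(1) assms(2)[of a b] a that by fastforce
  then show "\<exists>r>0. \<forall>b\<in>Z. D a b < r \<longrightarrow> b \<in> {a \<in> Z. \<pi> a \<in> W}"
    using r(1) by blast
qed auto

lemma accessible_factor:
  assumes acc: "accessible Z D g"
    and onto: "\<pi> ` Z = Z'"
    and contr: "\<And>a b. a \<in> Z \<Longrightarrow> b \<in> Z \<Longrightarrow> D' (\<pi> a) (\<pi> b) \<le> D a b"
    and maps: "g ` Z \<subseteq> Z"
    and semiconj: "\<And>a. a \<in> Z \<Longrightarrow> \<pi> (g a) = g' (\<pi> a)"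
  shows "accessible Z' D' g'"
  unfolding accessible_def
proof (intro allI impI)
  fix \<epsilon> :: real and U V
  assume \<epsilon>: "\<epsilon> > 0"
    and UV: "metric_open_in Z' D' U \<and> U \<noteq> {} \<and> metric_open_in Z' D' V \<and> V \<noteq> {}"
  have pull: "metric_open_in Z D {a \<in> Z. \<pi> a \<in> W}" "{a \<in> Z. \<pi> a \<in> W} \<noteq> {}"
    if "metric_open_in Z' D' W" "W \<noteq> {}" for W
    using metric_open_in_vimage[of \<pi> Z Z' D' D W] that onto contr
    unfolding metric_open_in_def by blast+
  obtain a b m where "a \<in> {a \<in> Z. \<pi> a \<in> U}" "b \<in> {b \<in> Z. \<pi> b \<in> V}" "m \<ge> 1"
    and close: "D ((g ^^ m) a) ((g ^^ m) b) < \<epsilon>"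
    using accessibleE[OF acc \<epsilon> pull[of U] pull[of V]] UV by blast
  then have ab: "a \<in> Z" "\<pi> a \<in> U" "b \<in> Z" "\<pi> b \<in> V" "m \<ge> 1" by simp_all
  have "(g ^^ m) c \<in> Z \<and> \<pi> ((g ^^ m) c) = (g' ^^ m) (\<pi> c)" if "c \<in> Z" for c
    using funpow_semiconj[where \<pi> = \<pi> and g' = g', OF maps semiconj that] .
  then have "D' ((g' ^^ m) (\<pi> a)) ((g' ^^ m) (\<pi> b)) < \<epsilon>"
    using contr[of "(g ^^ m) a" "(g ^^ m) b"] close ab by fastforce
  then show "\<exists>x\<in>U. \<exists>y\<in>V. \<exists>m. 1 \<le> m \<and> D' ((g' ^^ m) x) ((g' ^^ m) y) < \<epsilon>"
    using ab by blast
qed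

lemma Fn_map_funpow: "(Fn_map f ^^ m) A = (f ^^ m) ` A"
  by (induction m) (auto simp: Fn_map_def image_comp)

lemma Fn_map_in_Fn:
  assumes "f ` X \<subseteq> X" "A \<in> Fn n X"
  shows "Fn_map f A \<in> Fn n X"
  using assms card_image_le[of A f] unfolding Fn_def Fn_map_def by auto

lemma dH_nonneg:
  assumes "A \<in> Fn n X" "B \<in> Fn n X"
  shows "0 \<le> dH A B"
  using assms unfolding dH_def Fn_def by (intro haus_dist_nonneg) auto

lemma metric_open_in_Fn_subsets:
  assumes U: "metric_open_in X dist U"
  shows "metric_open_in (Fn n X) dH {A \<in> Fn n X. A \<subseteq> U}"
  unfolding metric_open_in_def
proof (intro conjI ballI)
  fix A assume A: "A \<in> {A \<in> Fn n X. A \<subseteq> U}"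
  then have fin: "finite A" "A \<noteq> {}" unfolding Fn_def by auto
  have "\<forall>a\<in>A. \<exists>r>0. \<forall>y\<in>X. dist a y < r \<longrightarrow> y \<in> U"
    using A U unfolding metric_open_in_def by blast
  then obtain R where R: "\<forall>a\<in>A. R a > 0 \<and> (\<forall>y\<in>X. dist a y < R a \<longrightarrow> y \<in> U)"
    by (rule bchoice[elim_format]) blast
  define r where "r = Min (R ` A)"
  have "B \<subseteq> U" if B: "B \<in> Fn n X" "dH A B < r" for B
  proof
    fix b assume b: "b \<in> B"
    obtain a where a: "a \<in> A" "dist a b < r"
      using haus_dist_lessD'[of dist A B r b] B b fin unfolding dH_def Fn_def by auto
    have "r \<le> R a" unfolding r_def using fin a by simp
    then show "b \<in> U" using R a B b unfolding Fn_def by auto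
  qed
  moreover have "r > 0" unfolding r_def using fin R by simp
  ultimately show "\<exists>r>0. \<forall>B\<in>Fn n X. dH A B < r \<longrightarrow> B \<in> {A \<in> Fn n X. A \<subseteq> U}"
    by blast
qed auto

lemma accessible_Fn_map_imp_accessible:
  fixes X :: "'a::metric_space set"
  assumes acc: "accessible (Fn n X) dH (Fn_map f)" and n: "n \<ge> 1"
  shows "accessible X dist f"
  unfolding accessible_def
proof (intro allI impI)
  fix \<epsilon> :: real and U V
  assume \<epsilon>: "\<epsilon> > 0"
    and UV: "metric_open_in X dist U \<and> U \<noteq> {} \<and> metric_open_in X dist V \<and> V \<noteq> {}"
  have nonempty: "{A \<in> Fn n X. A \<subseteq> W} \<noteq> {}" if W: "metric_open_in X dist W" "W \<noteq> {}" for W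
  proof -
    obtain w where "w \<in> W" using W by auto
    then have "{w} \<in> {A \<in> Fn n X. A \<subseteq> W}"
      using W n unfolding metric_open_in_def Fn_def by auto
    then show ?thesis by blast
  qed
  obtain A B m where "A \<in> {A \<in> Fn n X. A \<subseteq> U}" "B \<in> {B \<in> Fn n X. B \<subseteq> V}" "m \<ge> 1"
    "dH ((Fn_map f ^^ m) A) ((Fn_map f ^^ m) B) < \<epsilon>"
    using accessibleE[OF acc \<epsilon> metric_open_in_Fn_subsets nonempty[of U]
        metric_open_in_Fn_subsets nonempty[of V]] UV by blast
  then have AB: "A \<in> Fn n X" "A \<subseteq> U" "B \<in> Fn n X" "B \<subseteq> V" "m \<ge> 1"
    and close: "dH ((f ^^ m) ` A) ((f ^^ m) ` B) < \<epsilon>"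
    by (simp_all add: Fn_map_funpow)
  obtain a where a: "a \<in> A" using AB unfolding Fn_def by auto
  obtain b where "b \<in> B" "dist ((f ^^ m) a) ((f ^^ m) b) < \<epsilon>"
    using haus_dist_lessD[OF close[unfolded dH_def], of "(f ^^ m) a"] a AB
    unfolding Fn_def by auto
  then show "\<exists>x\<in>U. \<exists>y\<in>V. \<exists>m. 1 \<le> m \<and> dist ((f ^^ m) x) ((f ^^ m) y) < \<epsilon>"
    using a AB by blast
qed

lemma rho_q_le_dH:
  assumes "A \<in> Fn n X" "B \<in> Fn n X"
  shows "rho X (q X A) (q X B) \<le> dH A B"
proof -
  have F1_union_q: "F1 X \<union> q X C = insert C (F1 X)" for C
    unfolding q_def by auto
  have F1_sub: "F1 X \<subseteq> Fn n X"
    using assms card_gt_0_iff[of A] unfolding F1_def Fn_def by auto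
  have "haus_dist dH (insert A (F1 X)) (insert B (F1 X)) \<le> dH A B"
  proof (rule haus_dist_insert_le)
    show "0 \<le> dH C C'" if "C \<in> insert A (insert B (F1 X))" "C' \<in> insert A (insert B (F1 X))"
      for C C'
      using that F1_sub assms dH_nonneg by blast
    show "dH C C = 0" if "C \<in> F1 X" for C
      using that by (auto simp: F1_def dH_def haus_dist_def)
  qed
  then show ?thesis unfolding rho_def F1_union_q .
qed

lemma SFn_map_q:
  assumes "f ` X \<subseteq> X"
  shows "SFn_map X f (q X A) = q X (Fn_map f A)"
proof (cases "A \<in> F1 X")
  case True
  then have "Fn_map f A \<in> F1 X" using assms unfolding F1_def Fn_map_def by auto
  then show ?thesis using True unfolding SFn_map_def q_def by simp
next
  case False
  then have "{A} \<noteq> F1 X" by auto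
  then show ?thesis using False unfolding SFn_map_def q_def by simp
qed

lemma accessible_Fn_map_imp_accessible_SFn_map:
  fixes X :: "'a::metric_space set"
  assumes "accessible (Fn n X) dH (Fn_map f)" "f ` X \<subseteq> X"
  shows "accessible (SFn n X) (rho X) (SFn_map X f)"
  using assms
  by (intro accessible_factor[where \<pi> = "q X"])
     (auto simp: SFn_def rho_q_le_dH Fn_map_in_Fn SFn_map_q)

theorem theorem7:
  fixes X :: "'a::metric_space set" and f :: "'a \<Rightarrow> 'a" and n :: nat
  assumes "compactum X"
    and "n \<ge> 2"
    and "f ` X \<subseteq> X"
    and "accessible (Fn n X) dH (Fn_map f)"
  shows "accessible X dist f \<and> accessible (SFn n X) (rho X) (SFn_map X f)"
  using accessible_Fn_map_imp_accessible[OF assms(4)]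
    accessible_Fn_map_imp_accessible_SFn_map[OF assms(4,3)] assms(2)
  by simp

end
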